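(* Consider a piecewise affine (PWA) system, as defined in the context, satisfying (A1) and (A2). Then the relative degree of every component model is $0$ for all time, i.e. $\mu_q = 0$ for all $q\in\{1,\dots,|Q|\}$ and all $k$, if and only if the global dynamical relative degree of the system is $0$.
   Context: A discrete-time piecewise affine (PWA) system is $x_{k+1}=\mathbf{A}_k x_k+\mathbf{B}_k u_k+\mathbf{F}_k$, $y_k=\mathbf{C}_k x_k+\mathbf{D}_k u_k+\mathbf{G}_k$, $k\in\mathbb{Z}$, with state $x_k\in\mathbb{R}^{n_x}$, input $u_k\in\mathbb{R}^{n_u}$, output $y_k\in\mathbb{R}^{n_y}$. For each $M\in\{A,B,F,C,D,G\}$, $\mathbf{M}_k=\sum_{q=1}^{|Q|} M_{q,k}K_q(\delta_k)$, where the $M_{q,k}$ are real matrices (possibly time-varying), $\delta_k=\delta(x_k)=H(Px_k-\theta)$ with $H$ the Heaviside step function applied elementwise, $P\in\mathbb{R}^{n_P\times n_x}$, $\theta\in\mathbb{R}^{n_P}$, and $K_q(\delta)=1$ if $\delta\in\Delta^*_q$ and $0$ otherwise, $\Delta^*_q$ being a set of binary vectors (signatures of location $q$). The locations $Q_q=\{x:\delta(x)\in\Delta^*_q\}$, $q=1,\dots,|Q|$, are disjoint, have union $\mathbb{R}^{n_x}$, and each is a union of disjoint convex polytopes (intersections of half spaces). The $q$-th component model is the affine time-varying system with matrices $A_{q,k},B_{q,k},F_{q,k},C_{q,k},D_{q,k},G_{q,k}$, and $\mu_q$ denotes its relative degree (the number of time steps it takes for an input value to influence the output; in particular $\mu_q=0$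 means $D_{q,k}\neq 0$). Global dynamical relative degree: the smallest integer $\mu\ge 0$ such that the explicit expression of $y_{k+\mu}$ in terms of the component matrices, the selector functions $K_q$, $x_k$ and $u_i$ ($i\ge k$) contains $u_k$ outside of a selector function for every switching sequence (sequence of visited locations) on the time steps $k,\dots,k+\mu$. Assumptions: (A1) $x_0\in X_0$, where $X_0$ is the set of initial conditions from which every location $Q_q$ is reachable in finite time; (A2) the system is single-input single-output, $n_u=n_y=1$. *)

theory Defs
  imports "HOL-Analysis.Analysis"
begin

text \<open>PWA system, single-input single-output (assumption A2).
  Time-varying component matrices are indexed by (q, k) with k :: int:
    A q k :: real^'n^'n,  B q k :: real^'n (column, n_u = 1),  F q k :: real^'n,
    C q k :: real^'n (row, n_y = 1),  D q k :: real,  G q k :: real.\<close>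

text \<open>Heaviside step applied elementwise (convention H(0) = 1); binary vectors
  are represented as 'p \<Rightarrow> bool.\<close>
definition delta :: "real^'n^'p \<Rightarrow> real^'p \<Rightarrow> real^'n \<Rightarrow> ('p \<Rightarrow> bool)" where
  "delta P theta x = (\<lambda>i. (P *v x - theta) $ i \<ge> 0)"

definition selK :: "(nat \<Rightarrow> ('p \<Rightarrow> bool) set) \<Rightarrow> nat \<Rightarrow> ('p \<Rightarrow> bool) \<Rightarrow> real" where
  "selK Sig q d = (if d \<in> Sig q then 1 else 0)"

definition location :: "real^'n^'p \<Rightarrow> real^'p \<Rightarrow> (nat \<Rightarrow> ('p \<Rightarrow> bool) set) \<Rightarrow> nat \<Rightarrow> (real^'n) set" where
  "location P theta Sig q = {x. delta P theta x \<in> Sig q}"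

text \<open>Well-formed location structure: at least one location, the locations are
  pairwise disjoint and cover the state space.  (Each location is automatically a
  union of disjoint convex polyhedral cells, namely the sign-pattern cells of P x - theta.)\<close>
definition pwa_partition :: "nat \<Rightarrow> real^'n^'p \<Rightarrow> real^'p \<Rightarrow> (nat \<Rightarrow> ('p \<Rightarrow> bool) set) \<Rightarrow> bool" where
  "pwa_partition nQ P theta Sig \<longleftrightarrow>
     nQ \<ge> 1 \<and>
     (\<forall>q\<in>{1..nQ}. \<forall>q'\<in>{1..nQ}. q \<noteq> q' \<longrightarrow> location P theta Sig q \<inter> location P theta Sig q' = {}) \<and>
     (\<Union>q\<in>{1..nQ}. location P theta Sig q) = UNIV"

definition pwa_step ::
  "nat \<Rightarrow> real^'n^'p \<Rightarrow> real^'p \<Rightarrow> (nat \<Rightarrow> ('p \<Rightarrow> bool) set) \<Rightarrow>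
   (nat \<Rightarrow> int \<Rightarrow> real^'n^'n) \<Rightarrow> (nat \<Rightarrow> int \<Rightarrow> real^'n) \<Rightarrow> (nat \<Rightarrow> int \<Rightarrow> real^'n) \<Rightarrow>
   int \<Rightarrow> real^'n \<Rightarrow> real \<Rightarrow> real^'n" where
  "pwa_step nQ P theta Sig A B F k x u =
     (let d = delta P theta x in
       (\<Sum>q\<in>{1..nQ}. selK Sig q d *\<^sub>R A q k) *v x
     + u *\<^sub>R (\<Sum>q\<in>{1..nQ}. selK Sig q d *\<^sub>R B q k)
     + (\<Sum>q\<in>{1..nQ}. selK Sig q d *\<^sub>R F q k))"

fun pwa_traj ::
  "nat \<Rightarrow> real^'n^'p \<Rightarrow> real^'p \<Rightarrow> (nat \<Rightarrow> ('p \<Rightarrow> bool) set) \<Rightarrow>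
   (nat \<Rightarrow> int \<Rightarrow> real^'n^'n) \<Rightarrow> (nat \<Rightarrow> int \<Rightarrow> real^'n) \<Rightarrow> (nat \<Rightarrow> int \<Rightarrow> real^'n) \<Rightarrow>
   real^'n \<Rightarrow> (nat \<Rightarrow> real) \<Rightarrow> nat \<Rightarrow> real^'n" where
  "pwa_traj nQ P theta Sig A B F x0 u 0 = x0"
| "pwa_traj nQ P theta Sig A B F x0 u (Suc n) =
     pwa_step nQ P theta Sig A B F (int n) (pwa_traj nQ P theta Sig A B F x0 u n) (u n)"

text \<open>Assumption (A1): every location is reachable in finite time from x_0.\<close>
definition in_X0 ::
  "nat \<Rightarrow> real^'n^'p \<Rightarrow> real^'p \<Rightarrow> (nat \<Rightarrow> ('p \<Rightarrow> bool) set) \<Rightarrow>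
   (nat \<Rightarrow> int \<Rightarrow> real^'n^'n) \<Rightarrow> (nat \<Rightarrow> int \<Rightarrow> real^'n) \<Rightarrow> (nat \<Rightarrow> int \<Rightarrow> real^'n) \<Rightarrow>
   real^'n \<Rightarrow> bool" where
  "in_X0 nQ P theta Sig A B F x0 \<longleftrightarrow>
     (\<forall>q\<in>{1..nQ}. \<exists>u n. pwa_traj nQ P theta Sig A B F x0 u n \<in> location P theta Sig q)"

text \<open>For a switching sequence sigma (sigma j = location visited at time k + j),
  the vector multiplying u_k in x_{k+m+1}:  A_{sigma m,k+m} ... A_{sigma 1,k+1} B_{sigma 0,k}.\<close>
fun sens :: "(nat \<Rightarrow> int \<Rightarrow> real^'n^'n) \<Rightarrow> (nat \<Rightarrow> int \<Rightarrow> real^'n) \<Rightarrow>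
             (nat \<Rightarrow> nat) \<Rightarrow> int \<Rightarrow> nat \<Rightarrow> real^'n" where
  "sens A B \<sigma> k 0 = B (\<sigma> 0) k"
| "sens A B \<sigma> k (Suc m) = A (\<sigma> (Suc m)) (k + int (Suc m)) *v sens A B \<sigma> k m"

text \<open>Coefficient of u_k in the explicit expression of y_{k+mu} along the
  switching sequence sigma.\<close>
fun ucoeff :: "(nat \<Rightarrow> int \<Rightarrow> real^'n^'n) \<Rightarrow> (nat \<Rightarrow> int \<Rightarrow> real^'n) \<Rightarrow>
               (nat \<Rightarrow> int \<Rightarrow> real^'n) \<Rightarrow> (nat \<Rightarrow> int \<Rightarrow> real) \<Rightarrow>
               (nat \<Rightarrow> nat) \<Rightarrow> int \<Rightarrow> nat \<Rightarrow> real" where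
  "ucoeff A B C D \<sigma> k 0 = D (\<sigma> 0) k"
| "ucoeff A B C D \<sigma> k (Suc m) = C (\<sigma> (Suc m)) (k + int (Suc m)) \<bullet> sens A B \<sigma> k m"

definition comp_reldeg :: "(nat \<Rightarrow> int \<Rightarrow> real^'n^'n) \<Rightarrow> (nat \<Rightarrow> int \<Rightarrow> real^'n) \<Rightarrow>
    (nat \<Rightarrow> int \<Rightarrow> real^'n) \<Rightarrow> (nat \<Rightarrow> int \<Rightarrow> real) \<Rightarrow> nat \<Rightarrow> int \<Rightarrow> nat \<Rightarrow> bool" where
  "comp_reldeg A B C D q k \<mu> \<longleftrightarrow>
     ucoeff A B C D (\<lambda>_. q) k \<mu> \<noteq> 0 \<and> (\<forall>\<nu><\<mu>. ucoeff A B C D (\<lambda>_. q) k \<nu> = 0)"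

text \<open>y_{k+mu} contains u_k (outside selectors) for every switching sequence
  over the time steps k..k+mu, for every time k.\<close>
definition contains_u_all :: "nat \<Rightarrow> (nat \<Rightarrow> int \<Rightarrow> real^'n^'n) \<Rightarrow> (nat \<Rightarrow> int \<Rightarrow> real^'n) \<Rightarrow>
    (nat \<Rightarrow> int \<Rightarrow> real^'n) \<Rightarrow> (nat \<Rightarrow> int \<Rightarrow> real) \<Rightarrow> nat \<Rightarrow> bool" where
  "contains_u_all nQ A B C D \<mu> \<longleftrightarrow>
     (\<forall>k::int. \<forall>\<sigma>. (\<forall>j\<le>\<mu>. \<sigma> j \<in> {1..nQ}) \<longrightarrow> ucoeff A B C D \<sigma> k \<mu> \<noteq> 0)"

definition global_reldeg :: "nat \<Rightarrow> (nat \<Rightarrow> int \<Rightarrow> real^'n^'n) \<Rightarrow> (nat \<Rightarrow> int \<Rightarrow> real^'n) \<Rightarrow>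
    (nat \<Rightarrow> int \<Rightarrow> real^'n) \<Rightarrow> (nat \<Rightarrow> int \<Rightarrow> real) \<Rightarrow> nat \<Rightarrow> bool" where
  "global_reldeg nQ A B C D \<mu> \<longleftrightarrow>
     contains_u_all nQ A B C D \<mu> \<and> (\<forall>\<nu><\<mu>. \<not> contains_u_all nQ A B C D \<nu>)"

end

theory Submission
  imports Defs
begin

text \<open>At relative degree 0 the coefficient of u_k in y_k is the feedthrough term
  D_{q,k} of the location q active at time k alone, so both sides of the equivalence
  say that D_{q,k} is nonzero for every location q and time k.\<close>

lemma comp_reldeg_0_iff: "comp_reldeg A B C D q k 0 \<longleftrightarrow> D q k \<noteq> 0"
  by (simp add: comp_reldeg_def)

lemma global_reldeg_0_iff: "global_reldeg nQ A B C D 0 \<longleftrightarrow> contains_u_all nQ A B C D 0"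
  by (simp add: global_reldeg_def)

lemma contains_u_all_0_iff:
  "contains_u_all nQ A B C D 0 \<longleftrightarrow> (\<forall>q\<in>{1..nQ}. \<forall>k. D q k \<noteq> 0)"
proof
  assume "contains_u_all nQ A B C D 0"
  then have "ucoeff A B C D (\<lambda>_. q) k 0 \<noteq> 0" if "q \<in> {1..nQ}" for q k
    using that unfolding contains_u_all_def by fastforce
  then show "\<forall>q\<in>{1..nQ}. \<forall>k. D q k \<noteq> 0"
    by simp
next
  assume "\<forall>q\<in>{1..nQ}. \<forall>k. D q k \<noteq> 0"
  then show "contains_u_all nQ A B C D 0"
    by (simp add: contains_u_all_def)
qed

theorem lemma1:
  fixes nQ :: nat
    and P :: "real^'n^'p" and theta :: "real^'p"
    and Sig :: "nat \<Rightarrow> ('p \<Rightarrow> bool) set"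
    and A :: "nat \<Rightarrow> int \<Rightarrow> real^'n^'n"
    and B F C :: "nat \<Rightarrow> int \<Rightarrow> real^'n"
    and D G :: "nat \<Rightarrow> int \<Rightarrow> real"
    and x0 :: "real^'n"
  assumes "pwa_partition nQ P theta Sig"
    and "in_X0 nQ P theta Sig A B F x0"
  shows "(\<forall>q\<in>{1..nQ}. \<forall>k. comp_reldeg A B C D q k 0) \<longleftrightarrow> global_reldeg nQ A B C D 0"
  by (simp add: comp_reldeg_0_iff global_reldeg_0_iff contains_u_all_0_iff)

end
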